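(* Let $\mathbf{B}$ be a binomial ring and $n\ge0$. For every linear functor $J\colon\mathfrak{MSet}_n\to\mathfrak{Mod}$ one has $\Phi(\Psi^{-1}(J))=J\circ A_n$ as functors on $\mathfrak{Laby}$ (hence on $\mathfrak{Laby}_n$). That is, $\Phi\circ\Psi^{-1}=(A_n)^\ast$: under the equivalences $\Phi$ (numerical functors of degree $n$ $\simeq$ linear functors on $\mathfrak{Laby}_n$) and $\Psi$ (homogeneous functors of degree $n$ $\simeq$ linear functors on $\mathfrak{MSet}_n$), pre-composition with the Ariadne functor $A_n$ corresponds to the forgetful functor from homogeneous to numerical functors.
   Context: Binomial ring: commutative unital, torsion-free, with $\binom ak\in\mathbf{B}$ for all $a\in\mathbf{B}$, $k\ge0$. $\mathfrak{Mod}$: $\mathbf{B}$-modules; $\mathfrak{XMod}$: finitely generated free $\mathbf{B}$-modules. Multi-sets: a finite set with positive integer multiplicities; $|A|$ is the sum of multiplicities, $\#A$ the support. For $|A|=|B|=n$, a multation $\mu\colon A\to B$ is a multi-set of pairs $(a,b)$ whose multi-set of first coordinates is $A$ and of second coordinates is $B$. $\mathfrak{MSet}_n$: objects formal finite direct sums of multi-sets of cardinality $n$; $\mathfrak{MSet}_n(A,B)$ is the free $\mathbf{B}$-module on multations $A\to B$; for $\nu\colon A\to B$, $\mu\colon B\to C$, $\mu\circ\nu=\sum_K\frac{\prod_{(a,c)}m_{K_{13}}(a,c)!}{\prod_{(a,b,c)}m_K(a,b,c)!}K_{13}$, summed over multi-sets $K$ of triples whose $(1,2)$-projection is $\nu$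 and $(2,3)$-projection is $\mu$ ($m$ = multiplicity, $K_{13}$ the $(1,3)$-projection). Divided-power notation: for distinct pairs, $\prod_j[a_j;b_j]^{[m_j]}$ is the multation containing $(a_j,b_j)$ with multiplicity $m_j$, with $[a;b]^{[i]}[a;b]^{[j]}=\binom{i+j}{i}[a;b]^{[i+j]}$. Mazes and $\mathfrak{Laby}$: a passage $p\colon x\to y$ carries label $\overline p\in\mathbf{B}$; a maze $P\colon X\to Y$ between finite sets is a finite multi-set of passages with every element of $X$ a source and of $Y$ a target. $\mathfrak{Laby}$: objects formal finite direct sums of finite sets; $\mathfrak{Laby}(X,Y)$ generated by mazes modulo $P\cup\{x\xrightarrow0y\}=0$ and $P\cup\{x\xrightarrow{a+b}y\}=P\cup\{x\xrightarrow ay\}+P\cup\{x\xrightarrow by\}+P\cup\{x\xrightarrow ay,x\xrightarrow by\}$; composition $P\circ Q=\sum_{U\sqsubseteq P\boxtimes Q}U$ ($U$ a sub-multi-set of composable pairs using all passage occurrences of $P$ and $Q$, read as the maze with passages $x\xrightarrow{\overline p\overline q}z$). Ariadne functor $A_n\colon\mathfrak{Laby}\to\mathfrak{MSet}_n$: $A_n(X)=\bigoplus_{A}A$ over multi-sets $A$ with support exactly $X$ and $|A|=n$; for a maze $P$ with passage occurrences $p\colon x_p\to y_p$, $A_n(P)=\sum_d\prod_p\overline p^{\,d_p}[x_p;y_p]^{[d_p]}$, summed over assignments $d_p\ge1$ with $\sum_pd_p=n$. $\Phi$: for a module functor $F$ (arbitrary functor $\mathfrak{XMod}\to\mathfrak{Mod}$),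 $\Phi(F)(X)=\operatorname{Im}F(\diamond_{x\in X}\pi_x)$ and $\Phi(F)(P)$ is the restriction of $F(\diamond_{p\in P}\overline p\sigma_{y_px_p})$, where $F(\alpha_1\diamond\cdots\diamond\alpha_k)=\sum_{I}(-1)^{k-|I|}F(\sum_{i\in I}\alpha_i)$, $b\sigma_{yx}\colon\mathbf{B}^X\to\mathbf{B}^Y$ sends $e_x\mapsto be_y$ and other basis vectors to $0$, and $\pi_x=\sigma_{xx}$. $\Psi^{-1}(J)$ is the module functor (the homogeneous functor of degree $n$ associated to $J$) given by $\mathbf{B}^X\mapsto\bigoplus_{\#A\subseteq X,\ |A|=n}J(A)$ and, for $s=\sum_{x\in X,y\in Y}s_{yx}\sigma_{yx}\colon\mathbf{B}^X\to\mathbf{B}^Y$, $s\mapsto\sum_{\#A\subseteq X,\#B\subseteq Y,|A|=|B|=n}\ \sum_{\mu\colon A\to B}s^\mu J(\mu)$, where $s^\mu=\prod_{(x,y)}s_{yx}^{m_\mu(x,y)}$. *)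

theory Defs
  imports Complex_Main "HOL-Library.Multiset"
begin

text \<open>A binomial ring: commutative unital, torsion-free, and closed under
  a choose k = a(a-1)...(a-k+1)/k!, i.e. k! divides a(a-1)...(a-k+1).\<close>
definition binomial_ring :: "'b::comm_ring_1 itself \<Rightarrow> bool" where
  "binomial_ring _ \<longleftrightarrow>
     (\<forall>(k::nat) (a::'b). 0 < k \<longrightarrow> of_nat k * a = 0 \<longrightarrow> a = 0) \<and>
     (\<forall>(a::'b) (k::nat). \<exists>c::'b. of_nat (fact k) * c = (\<Prod>i<k. a - of_nat i))"

text \<open>A multation mu : A -> B is a multiset of pairs; its source/target are the
  multisets of first/second coordinates.\<close>
definition msrc :: "('x \<times> 'x) multiset \<Rightarrow> 'x multiset" where
  "msrc mu = image_mset fst mu"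
definition mtgt :: "('x \<times> 'x) multiset \<Rightarrow> 'x multiset" where
  "mtgt mu = image_mset snd mu"

definition multations :: "'x multiset \<Rightarrow> 'x multiset \<Rightarrow> ('x \<times> 'x) multiset set" where
  "multations A B = {mu. msrc mu = A \<and> mtgt mu = B}"

definition mdiag :: "'x multiset \<Rightarrow> ('x \<times> 'x) multiset" where
  "mdiag A = image_mset (\<lambda>a. (a, a)) A"

definition comp_triples ::
  "('x \<times> 'x) multiset \<Rightarrow> ('x \<times> 'x) multiset \<Rightarrow> ('x \<times> 'x \<times> 'x) multiset set" where
  "comp_triples nu mu = {K. image_mset (\<lambda>(a,b,c). (a,b)) K = nu \<and> image_mset (\<lambda>(a,b,c). (b,c)) K = mu}"

definition proj13 :: "('x \<times> 'x \<times> 'x) multiset \<Rightarrow> ('x \<times> 'x) multiset" where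
  "proj13 K = image_mset (\<lambda>(a,b,c). (a,c)) K"

definition comp_coeff :: "('x \<times> 'x \<times> 'x) multiset \<Rightarrow> nat" where
  "comp_coeff K = (\<Prod>q\<in>set_mset (proj13 K). fact (count (proj13 K) q))
                   div (\<Prod>t\<in>set_mset K. fact (count K t))"

text \<open>A linear functor J : MSet_n -> Mod is given (on single multisets; it extends
  additively to formal direct sums) by a B-module J(A) for each multiset A with |A| = n,
  realised as a submodule JO A of an ambient B-module 'm, and a B-linear map
  JM mu : J(A) -> J(B) for every multation mu : A -> B (basis element of MSet_n(A,B));
  a general morphism acts by B-linear extension.\<close>
definition linear_functor_MSet ::
  "nat \<Rightarrow> ('b::comm_ring_1 \<Rightarrow> 'm::ab_group_add \<Rightarrow> 'm) \<Rightarrow> ('x multiset \<Rightarrow> 'm set)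
     \<Rightarrow> (('x \<times> 'x) multiset \<Rightarrow> 'm \<Rightarrow> 'm) \<Rightarrow> bool" where
  "linear_functor_MSet n scale JO JM \<longleftrightarrow>
     (\<forall>A. size A = n \<longrightarrow> module.subspace scale (JO A)) \<and>
     (\<forall>mu. size mu = n \<longrightarrow>
        (\<forall>v\<in>JO (msrc mu). JM mu v \<in> JO (mtgt mu)) \<and>
        (\<forall>v\<in>JO (msrc mu). \<forall>w\<in>JO (msrc mu). JM mu (v + w) = JM mu v + JM mu w) \<and>
        (\<forall>c. \<forall>v\<in>JO (msrc mu). JM mu (scale c v) = scale c (JM mu v))) \<and>
     (\<forall>A. size A = n \<longrightarrow> (\<forall>v\<in>JO A. JM (mdiag A) v = v)) \<and>
     (\<forall>nu mu. size nu = n \<longrightarrow> mtgt nu = msrc mu \<longrightarrow>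
        (\<forall>v\<in>JO (msrc nu).
           JM mu (JM nu v) = (\<Sum>K\<in>comp_triples nu mu. scale (of_nat (comp_coeff K)) (JM (proj13 K) v))))"

definition msets_in :: "'x set \<Rightarrow> nat \<Rightarrow> 'x multiset set" where
  "msets_in X n = {A. set_mset A \<subseteq> X \<and> size A = n}"

text \<open>Elements of a direct sum (+)_{A in I} J(A) are functions v with v A in J(A) for
  A in I and v A = 0 otherwise.\<close>
definition dsum :: "'x multiset set \<Rightarrow> ('x multiset \<Rightarrow> 'm set) \<Rightarrow> ('x multiset \<Rightarrow> 'm::zero) set" where
  "dsum I JO = {v. (\<forall>A\<in>I. v A \<in> JO A) \<and> (\<forall>A. A \<notin> I \<longrightarrow> v A = 0)}"

text \<open>Psi^{-1}(J)(B^X) = (+)_{#A subseteq X, |A| = n} J(A).\<close>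
definition PsiInv_obj :: "nat \<Rightarrow> ('x multiset \<Rightarrow> 'm set) \<Rightarrow> 'x set \<Rightarrow> ('x multiset \<Rightarrow> 'm::zero) set" where
  "PsiInv_obj n JO X = dsum (msets_in X n) JO"

text \<open>A linear map s : B^X -> B^Y is given by its matrix s y x (entries for x in X,
  y in Y).  s^mu = prod_{(x,y)} s_{yx}^{m_mu(x,y)}.\<close>
definition smon :: "('x \<Rightarrow> 'x \<Rightarrow> 'b::comm_ring_1) \<Rightarrow> ('x \<times> 'x) multiset \<Rightarrow> 'b" where
  "smon s mu = (\<Prod>q\<in>set_mset mu. s (snd q) (fst q) ^ count mu q)"

definition PsiInv_map ::
  "nat \<Rightarrow> ('b::comm_ring_1 \<Rightarrow> 'm::ab_group_add \<Rightarrow> 'm) \<Rightarrow> (('x \<times> 'x) multiset \<Rightarrow> 'm \<Rightarrow> 'm)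
     \<Rightarrow> 'x set \<Rightarrow> 'x set \<Rightarrow> ('x \<Rightarrow> 'x \<Rightarrow> 'b) \<Rightarrow> ('x multiset \<Rightarrow> 'm) \<Rightarrow> ('x multiset \<Rightarrow> 'm)" where
  "PsiInv_map n scale JM X Y s v =
     (\<lambda>B. if B \<in> msets_in Y n then
            (\<Sum>A\<in>msets_in X n. \<Sum>mu\<in>multations A B. scale (smon s mu) (JM mu (v A)))
          else 0)"

text \<open>F(alpha_1 <> ... <> alpha_k) = sum_{I} (-1)^{k-|I|} F(sum_{i in I} alpha_i),
  for a family alpha indexed by a finite set Ix.\<close>
definition cross_eff ::
  "('b::comm_ring_1 \<Rightarrow> 'm::ab_group_add \<Rightarrow> 'm) \<Rightarrow> (('x \<Rightarrow> 'x \<Rightarrow> 'b) \<Rightarrow> 'v \<Rightarrow> ('x multiset \<Rightarrow> 'm))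
     \<Rightarrow> 'i set \<Rightarrow> ('i \<Rightarrow> 'x \<Rightarrow> 'x \<Rightarrow> 'b) \<Rightarrow> 'v \<Rightarrow> ('x multiset \<Rightarrow> 'm)" where
  "cross_eff scale Fm Ix alpha v =
     (\<lambda>B. \<Sum>I\<in>Pow Ix. scale ((-1) ^ (card Ix - card I))
                         (Fm (\<lambda>y x. \<Sum>i\<in>I. alpha i y x) v B))"

text \<open>b sigma_{yx} : e_x |-> b e_y, as a matrix; pi_x = sigma_{xx}.\<close>
definition sigma :: "'b::comm_ring_1 \<Rightarrow> 'x \<Rightarrow> 'x \<Rightarrow> ('x \<Rightarrow> 'x \<Rightarrow> 'b)" where
  "sigma b y x = (\<lambda>y' x'. if y' = y \<and> x' = x then b else 0)"

text \<open>Phi(F)(X) = Im F(<>_{x in X} pi_x), for F = Psi^{-1}(J).\<close>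
definition Phi_PsiInv_obj ::
  "nat \<Rightarrow> ('b::comm_ring_1 \<Rightarrow> 'm::ab_group_add \<Rightarrow> 'm) \<Rightarrow> ('x multiset \<Rightarrow> 'm set)
     \<Rightarrow> (('x \<times> 'x) multiset \<Rightarrow> 'm \<Rightarrow> 'm) \<Rightarrow> 'x set \<Rightarrow> ('x multiset \<Rightarrow> 'm) set" where
  "Phi_PsiInv_obj n scale JO JM X =
     cross_eff scale (PsiInv_map n scale JM X X) X (\<lambda>x. sigma 1 x x) ` PsiInv_obj n JO X"

text \<open>A maze is represented by the list of its passage occurrences (x, y, label);
  passages run from X to Y, every x in X is a source and every y in Y a target.\<close>
definition is_maze :: "'x set \<Rightarrow> 'x set \<Rightarrow> ('x \<times> 'x \<times> 'b) list \<Rightarrow> bool" where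
  "is_maze X Y P \<longleftrightarrow> finite X \<and> finite Y \<and>
     (\<forall>p\<in>set P. fst p \<in> X \<and> fst (snd p) \<in> Y) \<and>
     X \<subseteq> fst ` set P \<and> Y \<subseteq> (fst \<circ> snd) ` set P"

text \<open>Phi(F)(P) is the restriction of F(<>_{p in P} pbar sigma_{y_p x_p}).\<close>
definition Phi_PsiInv_map ::
  "nat \<Rightarrow> ('b::comm_ring_1 \<Rightarrow> 'm::ab_group_add \<Rightarrow> 'm) \<Rightarrow> (('x \<times> 'x) multiset \<Rightarrow> 'm \<Rightarrow> 'm)
     \<Rightarrow> 'x set \<Rightarrow> 'x set \<Rightarrow> ('x \<times> 'x \<times> 'b) list \<Rightarrow> ('x multiset \<Rightarrow> 'm) \<Rightarrow> ('x multiset \<Rightarrow> 'm)" where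
  "Phi_PsiInv_map n scale JM X Y P =
     cross_eff scale (PsiInv_map n scale JM X Y) {..<length P}
       (\<lambda>i. sigma (snd (snd (P ! i))) (fst (snd (P ! i))) (fst (P ! i)))"

text \<open>J(A_n(X)) = (+)_{#A = X, |A| = n} J(A).\<close>
definition JA_obj :: "nat \<Rightarrow> ('x multiset \<Rightarrow> 'm set) \<Rightarrow> 'x set \<Rightarrow> ('x multiset \<Rightarrow> 'm::zero) set" where
  "JA_obj n JO X = dsum {A. set_mset A = X \<and> size A = n} JO"

text \<open>Assignments d_p >= 1 with sum n, indexed by the passage occurrences.\<close>
definition assignments :: "nat \<Rightarrow> nat \<Rightarrow> nat list set" where
  "assignments k n = {d. length d = k \<and> (\<forall>i<k. 1 \<le> d ! i) \<and> sum_list d = n}"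

text \<open>The multation underlying prod_p [x_p; y_p]^{[d_p]}.\<close>
definition dmult :: "('x \<times> 'x \<times> 'b) list \<Rightarrow> nat list \<Rightarrow> ('x \<times> 'x) multiset" where
  "dmult P d = (\<Sum>i<length P. replicate_mset (d ! i) (fst (P ! i), fst (snd (P ! i))))"

text \<open>Using [a;b]^{[i]}[a;b]^{[j]} = binom(i+j,i) [a;b]^{[i+j]}:
  prod_p [x_p;y_p]^{[d_p]} = (prod_q m(q)! / prod_p d_p!) * dmult P d.\<close>
definition dp_coeff :: "('x \<times> 'x \<times> 'b) list \<Rightarrow> nat list \<Rightarrow> nat" where
  "dp_coeff P d = (\<Prod>q\<in>set_mset (dmult P d). fact (count (dmult P d) q))
                  div (\<Prod>i<length P. fact (d ! i))"

text \<open>J(A_n(P)) with A_n(P) = sum_d prod_p pbar^{d_p} [x_p;y_p]^{[d_p]}.\<close>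
definition JA_map ::
  "nat \<Rightarrow> ('b::comm_ring_1 \<Rightarrow> 'm::ab_group_add \<Rightarrow> 'm) \<Rightarrow> (('x \<times> 'x) multiset \<Rightarrow> 'm \<Rightarrow> 'm)
     \<Rightarrow> ('x \<times> 'x \<times> 'b) list \<Rightarrow> ('x multiset \<Rightarrow> 'm) \<Rightarrow> ('x multiset \<Rightarrow> 'm)" where
  "JA_map n scale JM P v =
     (\<lambda>B. \<Sum>d\<in>assignments (length P) n.
            if mtgt (dmult P d) = B then
              scale (of_nat (dp_coeff P d) * (\<Prod>i<length P. snd (snd (P ! i)) ^ (d ! i)))
                    (JM (dmult P d) (v (msrc (dmult P d))))
            else 0)"

end

theory Submission
  imports Defs "HOL-Library.FuncSet"
begin

text \<open>Write F for Psi^-1(J). For a matrix s = sum_i b_i sigma(y_i, x_i), with i ranging over a set I,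
  the multinomial theorem expands every monomial s^mu; hence F(s) is a sum over the count vectors d
  supported in I of J applied to the multation sum_i d_i (x_i, y_i), weighted by prod_i b_i^d_i and
  by the integer prod_q m(q)! / prod_i d_i!. The cross effect is the Moebius inversion of these
  sums over the subsets I of the index set, so it retains exactly the count vectors with all
  d_i >= 1: the terms of the Ariadne functor. For the projections pi_x these terms are the diagonal
  multations of the multisets with support exactly X, on which J is the identity, so Phi(F)(X) is
  the summand J(A_n(X)) of F(B^X). Only integer coefficients occur.\<close>

definition mset_of_counts :: "nat \<Rightarrow> (nat \<Rightarrow> 'a) \<Rightarrow> (nat \<Rightarrow> nat) \<Rightarrow> 'a multiset" where
  "mset_of_counts k f d = (\<Sum>i<k. replicate_mset (d i) (f i))"

lemma count_mset_of_counts: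
  "count (mset_of_counts k f d) x = (\<Sum>i<k. if f i = x then d i else 0)"
  unfolding mset_of_counts_def count_sum by (rule sum.cong) auto

lemma count_mset_of_counts_fiber:
  "count (mset_of_counts k f d) x = (\<Sum>i\<in>{i\<in>{..<k}. f i = x}. d i)"
  unfolding count_mset_of_counts by (rule sum.inter_filter[symmetric]) simp

lemma count_mset_of_counts_inj:
  assumes "inj_on f {..<k}" "i < k"
  shows "count (mset_of_counts k f d) (f i) = d i"
proof -
  have "count (mset_of_counts k f d) (f i) = (\<Sum>j<k. if j = i then d j else 0)"
    unfolding count_mset_of_counts by (rule sum.cong) (use assms in \<open>auto dest: inj_onD\<close>)
  thus ?thesis using assms by simp
qed

lemma le_count_mset_of_counts: "i < k \<Longrightarrow> d i \<le> count (mset_of_counts k f d) (f i)"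
  unfolding count_mset_of_counts
  using member_le_sum[of i "{..<k}" "\<lambda>j. if f j = f i then d j else 0"] by auto

lemma size_mset_of_counts: "size (mset_of_counts k f d) = (\<Sum>i<k. d i)"
  unfolding mset_of_counts_def size_multiset_sum by simp

lemma image_mset_of_counts: "image_mset g (mset_of_counts k f d) = mset_of_counts k (g \<circ> f) d"
  unfolding mset_of_counts_def by (induction k) auto

lemma set_mset_of_counts: "set_mset (mset_of_counts k f d) = f ` {i. i < k \<and> d i \<noteq> 0}"
proof -
  have "x \<in># mset_of_counts k f d \<longleftrightarrow> (\<exists>i<k. d i \<noteq> 0 \<and> f i = x)" for x
  proof -
    have "x \<in># mset_of_counts k f d \<longleftrightarrow> count (mset_of_counts k f d) x \<noteq> 0"
      by (simp add: count_eq_zero_iff)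
    also have "\<dots> \<longleftrightarrow> (\<exists>i<k. d i \<noteq> 0 \<and> f i = x)"
      unfolding count_mset_of_counts by auto
    finally show ?thesis .
  qed
  thus ?thesis by auto
qed

lemma mset_of_counts_fun_upd:
  assumes "j < k"
  shows "mset_of_counts k f (d(j := t)) + replicate_mset (d j) (f j)
         = mset_of_counts k f d + replicate_mset t (f j)"
proof -
  have split: "mset_of_counts k f e = replicate_mset (e j) (f j)
                 + (\<Sum>i\<in>{..<k}-{j}. replicate_mset (e i) (f i))" for e
    unfolding mset_of_counts_def using assms by (subst sum.remove[of _ j]) auto
  have "(\<Sum>i\<in>{..<k}-{j}. replicate_mset ((d(j := t)) i) (f i))
        = (\<Sum>i\<in>{..<k}-{j}. replicate_mset (d i) (f i))"
    by (rule sum.cong) auto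
  thus ?thesis using split[of d] split[of "d(j := t)"] by (simp add: add_ac)
qed

lemma mset_of_counts_in_msets_in:
  assumes "\<forall>i<k. f i \<in> X" "(\<Sum>i<k. d i) = n"
  shows "mset_of_counts k f d \<in> msets_in X n"
  using assms by (auto simp: msets_in_def set_mset_of_counts size_mset_of_counts)

lemma finite_msets_in: "finite X \<Longrightarrow> finite (msets_in X n)"
  unfolding msets_in_def using finite_multisets_of_size[of X n]
  by (simp add: multisets_of_size_def)

text \<open>The coefficient \<open>dp_coeff\<close> for count functions instead of lists; the division is exact
  by \<open>prod_fact_dvd_prod_fact_count\<close>.\<close>
definition multinomial_coeff :: "nat \<Rightarrow> (nat \<Rightarrow> 'a) \<Rightarrow> (nat \<Rightarrow> nat) \<Rightarrow> nat" where
  "multinomial_coeff k f d =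
     (\<Prod>q\<in>set_mset (mset_of_counts k f d). fact (count (mset_of_counts k f d) q))
     div (\<Prod>i<k. fact (d i))"

lemma prod_fact_dvd_fact_sum:
  "finite G \<Longrightarrow> (\<Prod>i\<in>G. fact (d i) :: nat) dvd fact (\<Sum>i\<in>G. d i)"
proof (induction G rule: finite_induct)
  case (insert a G)
  have "fact (d a) * (\<Prod>i\<in>G. fact (d i) :: nat) dvd fact (d a) * fact (\<Sum>i\<in>G. d i)"
    using insert by simp
  also have "\<dots> dvd fact (d a + (\<Sum>i\<in>G. d i))" by (rule fact_fact_dvd_fact)
  finally show ?case using insert by simp
qed simp

lemma prod_fact_count_mset_of_counts:
  "(\<Prod>q\<in>set_mset (mset_of_counts k f d). fact (count (mset_of_counts k f d) q)) =
   (\<Prod>q\<in>f ` {..<k}. fact (count (mset_of_counts k f d) q) :: nat)"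
proof (rule prod.mono_neutral_left)
  show "\<forall>q\<in>f ` {..<k} - set_mset (mset_of_counts k f d). fact (count (mset_of_counts k f d) q) = (1::nat)"
    by (auto simp: not_in_iff)
qed (auto simp: set_mset_of_counts)

lemma prod_fact_dvd_prod_fact_count:
  "(\<Prod>i<k. fact (d i)) dvd (\<Prod>q\<in>f ` {..<k}. fact (count (mset_of_counts k f d) q) :: nat)"
proof -
  have "(\<Prod>i<k. fact (d i)) = (\<Prod>q\<in>f ` {..<k}. \<Prod>i\<in>{i\<in>{..<k}. f i = q}. fact (d i) :: nat)"
    by (rule prod.group[symmetric]) auto
  also have "\<dots> dvd (\<Prod>q\<in>f ` {..<k}. fact (count (mset_of_counts k f d) q))"
    unfolding count_mset_of_counts_fiber
    by (rule prod_dvd_prod) (rule prod_fact_dvd_fact_sum, simp)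
  finally show ?thesis .
qed

lemma multinomial_coeff_zero: "multinomial_coeff k f (\<lambda>_. 0) = 1"
  by (simp add: multinomial_coeff_def mset_of_counts_def)

lemma multinomial_coeff_inj:
  assumes "inj_on f {..<k}"
  shows "multinomial_coeff k f d = 1"
proof -
  have "(\<Prod>q\<in>f ` {..<k}. fact (count (mset_of_counts k f d) q)) = (\<Prod>i<k. fact (d i) :: nat)"
    by (simp add: prod.reindex[OF assms] count_mset_of_counts_inj[OF assms])
  thus ?thesis by (simp add: multinomial_coeff_def prod_fact_count_mset_of_counts)
qed

text \<open>Raising a vanishing count \<open>d\<^sub>j\<close> to \<open>t\<close> multiplies the coefficient by
  \<open>(m + t choose t)\<close>, where \<open>m\<close> is the old multiplicity of \<open>f j\<close>; this is the
  divided-power rule \<open>[a;b]\<^bsup>[m]\<^esup>[a;b]\<^bsup>[t]\<^esup> = (m + t choose t)[a;b]\<^bsup>[m+t]\<^esup>\<close>.\<close>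
lemma multinomial_coeff_fun_upd:
  assumes "j < k" "d j = 0"
  shows "multinomial_coeff k f (d(j := t)) =
           (count (mset_of_counts k f (d(j := t))) (f j) choose t) * multinomial_coeff k f d"
proof -
  let ?M = "mset_of_counts k f d" and ?M' = "mset_of_counts k f (d(j := t))"
  have M': "?M' = ?M + replicate_mset t (f j)"
    using mset_of_counts_fun_upd[OF assms(1), of f d t] assms(2) by simp
  define m where "m = count ?M (f j)"
  define R where "R = (\<Prod>q\<in>f ` {..<k} - {f j}. fact (count ?M q) :: nat)"
  define Q where "Q = (\<Prod>i\<in>{..<k} - {j}. fact (d i) :: nat)"
  have fj: "f j \<in> f ` {..<k}" using assms by auto
  have num: "(\<Prod>q\<in>f ` {..<k}. fact (count ?M q)) = fact m * R"
    unfolding R_def m_def by (subst prod.remove[OF _ fj]) auto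
  have num': "(\<Prod>q\<in>f ` {..<k}. fact (count ?M' q)) = fact (m + t) * R"
  proof -
    have "(\<Prod>q\<in>f ` {..<k} - {f j}. fact (count ?M' q)) = R"
      unfolding R_def M' by (rule prod.cong) auto
    thus ?thesis unfolding m_def M' by (subst prod.remove[OF _ fj]) auto
  qed
  have den: "(\<Prod>i<k. fact (d i)) = Q"
    unfolding Q_def using assms by (subst prod.remove[of _ j]) auto
  have den': "(\<Prod>i<k. fact ((d(j := t)) i)) = fact t * Q"
  proof -
    have "(\<Prod>i\<in>{..<k} - {j}. fact ((d(j := t)) i)) = Q"
      unfolding Q_def by (rule prod.cong) auto
    thus ?thesis using assms by (subst prod.remove[of _ j]) auto
  qed
  have dvd: "Q dvd fact m * R"
    using prod_fact_dvd_prod_fact_count[where k = k and d = d and f = f] by (simp add: num den)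
  have "multinomial_coeff k f (d(j := t)) = fact (m + t) * R div (fact t * Q)"
    unfolding multinomial_coeff_def prod_fact_count_mset_of_counts num' den' ..
  also have "fact (m + t) = fact t * (fact m * ((m + t) choose t) :: nat)"
    using binomial_fact_lemma[of t "m + t"] by (simp add: algebra_simps)
  also have "fact t * (fact m * ((m + t) choose t)) * R div (fact t * Q) =
             ((m + t) choose t) * (fact m * R div Q)"
    using dvd by (simp add: algebra_simps div_mult_swap)
  also have "fact m * R div Q = multinomial_coeff k f d"
    unfolding multinomial_coeff_def prod_fact_count_mset_of_counts num den ..
  finally show ?thesis
    unfolding M' m_def by (simp add: fun_upd_def)
qed

definition sigma_sum :: "(nat \<Rightarrow> 'x \<times> 'x) \<Rightarrow> (nat \<Rightarrow> 'b::comm_ring_1) \<Rightarrow> nat set \<Rightarrow> 'x \<Rightarrow> 'x \<Rightarrow> 'b" where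
  "sigma_sum f b I = (\<lambda>y x. \<Sum>i\<in>I. if f i = (x, y) then b i else 0)"

lemma sum_sigma_eq_sigma_sum:
  "(\<lambda>y x. \<Sum>i\<in>I. sigma (b i) (snd (f i)) (fst (f i)) y x) = sigma_sum f b I"
  unfolding sigma_sum_def sigma_def by (intro ext sum.cong refl) (auto simp: prod_eq_iff)

lemma sigma_sum_insert:
  "finite I \<Longrightarrow> j \<notin> I \<Longrightarrow>
     sigma_sum f b (insert j I) y x = (if f j = (x, y) then b j else 0) + sigma_sum f b I y x"
  by (simp add: sigma_sum_def)

definition mset_decompositions ::
  "nat \<Rightarrow> (nat \<Rightarrow> 'a) \<Rightarrow> nat set \<Rightarrow> 'a multiset \<Rightarrow> (nat \<Rightarrow> nat) set" where
  "mset_decompositions k f I M = {d. (\<forall>i. i \<notin> I \<longrightarrow> d i = 0) \<and> mset_of_counts k f d = M}"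

lemma finite_bounded_counts:
  assumes "finite I"
  shows "finite {d::nat \<Rightarrow> nat. (\<forall>i. i \<notin> I \<longrightarrow> d i = 0) \<and> (\<forall>i. d i \<le> N)}" (is "finite ?S")
proof (rule finite_imageD)
  show "inj_on (\<lambda>d. restrict d I) ?S"
    by (rule inj_onI) (auto simp: fun_eq_iff restrict_def, metis)
  have "(\<lambda>d. restrict d I) ` ?S \<subseteq> PiE I (\<lambda>_. {..N})" by auto
  thus "finite ((\<lambda>d. restrict d I) ` ?S)"
    by (rule finite_subset) (simp add: assms finite_PiE)
qed

lemma finite_mset_decompositions:
  assumes "I \<subseteq> {..<k}"
  shows "finite (mset_decompositions k f I M)"
proof (rule finite_subset)
  show "mset_decompositions k f I M \<subseteq>
          {d. (\<forall>i. i \<notin> I \<longrightarrow> d i = 0) \<and> (\<forall>i. d i \<le> size M)}"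
  proof safe
    fix d i assume d: "d \<in> mset_decompositions k f I M"
    show "d i \<le> size M"
    proof (cases "i \<in> I")
      case True
      with assms have "d i \<le> count (mset_of_counts k f d) (f i)"
        by (intro le_count_mset_of_counts) auto
      also have "\<dots> \<le> size (mset_of_counts k f d)" by (rule count_le_size)
      finally show ?thesis using d by (simp add: mset_decompositions_def)
    qed (use d in \<open>auto simp: mset_decompositions_def\<close>)
  qed (auto simp: mset_decompositions_def)
  show "finite {d. (\<forall>i. i \<notin> I \<longrightarrow> d i = 0) \<and> (\<forall>i. d i \<le> size M)}"
    using assms by (intro finite_bounded_counts) (auto intro: finite_subset)
qed

lemma mset_decompositions_empty:
  "mset_decompositions k f {} M = (if M = {#} then {\<lambda>_. 0} else {})"
  by (auto simp: mset_decompositions_def mset_of_counts_def fun_eq_iff)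

lemma bij_betw_mset_decompositions_insert:
  assumes "j < k" "j \<notin> I"
  shows "bij_betw (\<lambda>(t, d). d(j := t))
           (SIGMA t:{..count M (f j)}. mset_decompositions k f I (M - replicate_mset t (f j)))
           (mset_decompositions k f (insert j I) M)"
proof (rule bij_betw_byWitness[where f' = "\<lambda>e. (e j, e(j := 0))"])
  let ?S = "SIGMA t:{..count M (f j)}. mset_decompositions k f I (M - replicate_mset t (f j))"
  have dj: "d j = 0" if "(t, d) \<in> ?S" for t d
    using that assms(2) by (auto simp: mset_decompositions_def)
  show "\<forall>p\<in>?S. (\<lambda>e. (e j, e(j := 0))) ((\<lambda>(t, d). d(j := t)) p) = p"
    using dj by (auto simp: fun_eq_iff)
  show "\<forall>e\<in>mset_decompositions k f (insert j I) M.
          (\<lambda>(t, d). d(j := t)) ((\<lambda>e. (e j, e(j := 0))) e) = e"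
    by simp
  show "(\<lambda>(t, d). d(j := t)) ` ?S \<subseteq> mset_decompositions k f (insert j I) M"
  proof (rule image_subsetI)
    fix p assume "p \<in> ?S"
    then obtain t d where p: "p = (t, d)" and td: "(t, d) \<in> ?S" by (cases p) auto
    have "mset_of_counts k f (d(j := t)) = mset_of_counts k f d + replicate_mset t (f j)"
      using mset_of_counts_fun_upd[OF assms(1), of f d t] dj[OF td] by simp
    also have "\<dots> = M"
      using td by (auto simp: mset_decompositions_def
                        simp flip: count_le_replicate_mset_subset_eq intro: subset_mset.diff_add)
    finally show "(\<lambda>(t, d). d(j := t)) p \<in> mset_decompositions k f (insert j I) M"
      using p td by (auto simp: mset_decompositions_def)
  qed
  show "(\<lambda>e. (e j, e(j := 0))) ` mset_decompositions k f (insert j I) M \<subseteq> ?S"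
  proof (rule image_subsetI)
    fix e assume e: "e \<in> mset_decompositions k f (insert j I) M"
    hence M: "mset_of_counts k f e = M" by (simp add: mset_decompositions_def)
    have "mset_of_counts k f (e(j := 0)) + replicate_mset (e j) (f j) = M"
      using mset_of_counts_fun_upd[OF assms(1), of f e 0] M by simp
    hence "mset_of_counts k f (e(j := 0)) = M - replicate_mset (e j) (f j)"
      by (metis add_diff_cancel_right')
    moreover have "e j \<le> count M (f j)"
      using le_count_mset_of_counts[OF assms(1), of e f] M by simp
    ultimately show "(e j, e(j := 0)) \<in> ?S"
      using e by (auto simp: mset_decompositions_def)
  qed
qed

lemma smon_superset:
  assumes "finite S" "set_mset mu \<subseteq> S"
  shows "smon s mu = (\<Prod>q\<in>S. s (snd q) (fst q) ^ count mu q)"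
  unfolding smon_def by (rule prod.mono_neutral_left) (use assms in \<open>auto simp: not_in_iff\<close>)

lemma smon_zero: "smon (\<lambda>y x. 0 :: 'b::comm_ring_1) mu = (if mu = {#} then 1 else 0)"
proof (cases "mu = {#}")
  case False
  then obtain q where "q \<in># mu" by (metis multiset_nonemptyE)
  hence "smon (\<lambda>y x. 0 :: 'b) mu = 0"
    unfolding smon_def
    by (intro prod_zero bexI[of _ q]) (auto simp: power_0_left count_eq_zero_iff)
  thus ?thesis using False by simp
qed (simp add: smon_def)

lemma smon_sigma_sum_insert:
  assumes "finite I" "j \<notin> I"
  shows "smon (sigma_sum f b (insert j I)) mu =
           (\<Sum>t\<le>count mu (f j). of_nat (count mu (f j) choose t) * b j ^ t
                                 * smon (sigma_sum f b I) (mu - replicate_mset t (f j)))"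
proof -
  define g where "g q = sigma_sum f b I (snd q) (fst q)" for q
  define T where "T = insert (f j) (set_mset mu)"
  define m where "m = count mu (f j)"
  define R where "R = (\<Prod>q\<in>T - {f j}. g q ^ count mu q)"
  have T: "finite T" "f j \<in> T" by (simp_all add: T_def)
  have rest: "smon (sigma_sum f b I) (mu - replicate_mset t (f j)) = g (f j) ^ (m - t) * R" for t
  proof -
    have "(\<Prod>q\<in>T - {f j}. g q ^ count (mu - replicate_mset t (f j)) q) = R"
      unfolding R_def by (rule prod.cong) auto
    moreover have "smon (sigma_sum f b I) (mu - replicate_mset t (f j)) =
                     (\<Prod>q\<in>T. g q ^ count (mu - replicate_mset t (f j)) q)"
      unfolding g_def by (rule smon_superset) (auto simp: T_def dest: in_diffD)
    ultimately show ?thesis by (simp add: prod.remove[OF T] m_def)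
  qed
  have "(\<Prod>q\<in>T - {f j}. sigma_sum f b (insert j I) (snd q) (fst q) ^ count mu q) = R"
    unfolding R_def g_def by (rule prod.cong) (auto simp: sigma_sum_insert assms)
  moreover have "smon (sigma_sum f b (insert j I)) mu =
                   (\<Prod>q\<in>T. sigma_sum f b (insert j I) (snd q) (fst q) ^ count mu q)"
    by (rule smon_superset) (auto simp: T_def)
  ultimately have "smon (sigma_sum f b (insert j I)) mu = (b j + g (f j)) ^ m * R"
    by (simp add: prod.remove[OF T] sigma_sum_insert assms g_def m_def)
  also have "\<dots> = (\<Sum>t\<le>m. of_nat (m choose t) * b j ^ t * (g (f j) ^ (m - t) * R))"
    by (simp add: binomial_ring sum_distrib_left sum_distrib_right algebra_simps)
  finally show ?thesis by (simp add: rest m_def)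
qed

lemma smon_sigma_sum:
  fixes b :: "nat \<Rightarrow> 'b::comm_ring_1"
  assumes "I \<subseteq> {..<k}"
  shows "smon (sigma_sum f b I) mu =
           (\<Sum>d\<in>mset_decompositions k f I mu. of_nat (multinomial_coeff k f d) * (\<Prod>i\<in>I. b i ^ d i))"
proof -
  have "finite I" using assms finite_subset by blast
  thus ?thesis using assms
  proof (induction I arbitrary: mu rule: finite_induct)
    case empty
    have "sigma_sum f b {} = (\<lambda>y x. 0)" by (simp add: sigma_sum_def fun_eq_iff)
    thus ?case by (simp add: smon_zero mset_decompositions_empty multinomial_coeff_zero)
  next
    case (insert j I)
    have j: "j < k" and I: "I \<subseteq> {..<k}" using insert.prems by auto
    let ?m = "count mu (f j)"
    let ?S = "SIGMA t:{..?m}. mset_decompositions k f I (mu - replicate_mset t (f j))"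
    let ?c = "\<lambda>d. of_nat (multinomial_coeff k f d) :: 'b"
    note bij = bij_betw_mset_decompositions_insert[OF j insert.hyps(2), of mu f]
    have summand: "of_nat (?m choose t) * b j ^ t * (?c d * (\<Prod>i\<in>I. b i ^ d i)) =
                  ?c (d(j := t)) * (\<Prod>i\<in>insert j I. b i ^ (d(j := t)) i)"
      if "(t, d) \<in> ?S" for t d
    proof -
      have "d j = 0" using that insert.hyps(2) by (auto simp: mset_decompositions_def)
      moreover have "mset_of_counts k f (d(j := t)) = mu"
        using bij_betw_apply[OF bij that] by (simp add: mset_decompositions_def)
      moreover have "(\<Prod>i\<in>I. b i ^ (d(j := t)) i) = (\<Prod>i\<in>I. b i ^ d i)"
        by (rule prod.cong) (use insert.hyps in auto)
      ultimately show ?thesis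
        using multinomial_coeff_fun_upd[OF j, of d f t] insert.hyps by (simp add: algebra_simps)
    qed
    have "smon (sigma_sum f b (insert j I)) mu =
            (\<Sum>t\<le>?m. \<Sum>d\<in>mset_decompositions k f I (mu - replicate_mset t (f j)).
               of_nat (?m choose t) * b j ^ t * (?c d * (\<Prod>i\<in>I. b i ^ d i)))"
      by (simp add: smon_sigma_sum_insert insert.hyps insert.IH[OF I] sum_distrib_left)
    also have "\<dots> = (\<Sum>(t, d)\<in>?S. of_nat (?m choose t) * b j ^ t * (?c d * (\<Prod>i\<in>I. b i ^ d i)))"
      by (rule sum.Sigma) (auto simp: finite_mset_decompositions[OF I])
    also have "\<dots> = (\<Sum>(t, d)\<in>?S. ?c (d(j := t)) * (\<Prod>i\<in>insert j I. b i ^ (d(j := t)) i))"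
      by (rule sum.cong) (auto simp: summand)
    also have "\<dots> = (\<Sum>e\<in>mset_decompositions k f (insert j I) mu. ?c e * (\<Prod>i\<in>insert j I. b i ^ e i))"
      using sum.reindex_bij_betw[OF bij, of "\<lambda>e. ?c e * (\<Prod>i\<in>insert j I. b i ^ e i)"]
      by (simp add: split_beta case_prod_beta')
    finally show ?case .
  qed
qed

definition supported_counts :: "nat \<Rightarrow> nat set \<Rightarrow> nat \<Rightarrow> (nat \<Rightarrow> nat) set" where
  "supported_counts k I n = {d. (\<forall>i. i \<notin> I \<longrightarrow> d i = 0) \<and> (\<Sum>i<k. d i) = n}"

lemma finite_supported_counts:
  assumes "I \<subseteq> {..<k}"
  shows "finite (supported_counts k I n)"
proof (rule finite_subset)
  show "supported_counts k I n \<subseteq> {d. (\<forall>i. i \<notin> I \<longrightarrow> d i = 0) \<and> (\<forall>i. d i \<le> n)}"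
  proof safe
    fix d i assume d: "d \<in> supported_counts k I n"
    show "d i \<le> n"
    proof (cases "i \<in> I")
      case True
      with assms have "d i \<le> (\<Sum>i<k. d i)" by (intro member_le_sum) auto
      thus ?thesis using d by (simp add: supported_counts_def)
    qed (use d in \<open>auto simp: supported_counts_def\<close>)
  qed (auto simp: supported_counts_def)
  show "finite {d. (\<forall>i. i \<notin> I \<longrightarrow> d i = 0) \<and> (\<forall>i. d i \<le> n)}"
    using assms by (intro finite_bounded_counts) (auto intro: finite_subset)
qed

lemma msrc_mset_of_counts: "msrc (mset_of_counts k f d) = mset_of_counts k (fst \<circ> f) d"
  by (simp add: msrc_def image_mset_of_counts)

lemma mtgt_mset_of_counts: "mtgt (mset_of_counts k f d) = mset_of_counts k (snd \<circ> f) d"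
  by (simp add: mtgt_def image_mset_of_counts)

text \<open>The contribution of the count vector \<open>d\<close>, i.e. of the multation \<open>\<Sum>\<^sub>i d\<^sub>i\<cdot>f i\<close>,
  to the \<open>B\<close>-component of \<open>\<Psi>\<^sup>-\<^sup>1(J)(\<Sum>\<^sub>i b\<^sub>i \<sigma>\<^bsub>f i\<^esub>)(v)\<close>.\<close>
definition PsiInv_term ::
  "('b::comm_ring_1 \<Rightarrow> 'm::ab_group_add \<Rightarrow> 'm) \<Rightarrow> (('x \<times> 'x) multiset \<Rightarrow> 'm \<Rightarrow> 'm) \<Rightarrow> nat
     \<Rightarrow> (nat \<Rightarrow> 'x \<times> 'x) \<Rightarrow> (nat \<Rightarrow> 'b) \<Rightarrow> ('x multiset \<Rightarrow> 'm) \<Rightarrow> 'x multiset \<Rightarrow> (nat \<Rightarrow> nat) \<Rightarrow> 'm" where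
  "PsiInv_term scale JM k f b v B d =
     (if mtgt (mset_of_counts k f d) = B then
        scale (of_nat (multinomial_coeff k f d) * (\<Prod>i<k. b i ^ d i))
              (JM (mset_of_counts k f d) (v (msrc (mset_of_counts k f d))))
      else 0)"

lemma bij_betw_supported_counts_multations:
  assumes "\<forall>i<k. fst (f i) \<in> X"
  shows "bij_betw (\<lambda>d. (msrc (mset_of_counts k f d), mset_of_counts k f d, d))
           {d \<in> supported_counts k I n. mtgt (mset_of_counts k f d) = B}
           (SIGMA A:msets_in X n. SIGMA mu:multations A B. mset_decompositions k f I mu)"
proof (rule bij_betw_byWitness[where f' = "\<lambda>(A, mu, d). d"])
  let ?S = "SIGMA A:msets_in X n. SIGMA mu:multations A B. mset_decompositions k f I mu"
  show "\<forall>a\<in>?S. (\<lambda>d. (msrc (mset_of_counts k f d), mset_of_counts k f d, d)) ((\<lambda>(A, mu, d). d) a) = a"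
    by (auto simp: mset_decompositions_def multations_def)
  show "(\<lambda>(A, mu, d). d) ` ?S \<subseteq> {d \<in> supported_counts k I n. mtgt (mset_of_counts k f d) = B}"
  proof (rule image_subsetI)
    fix a assume "a \<in> ?S"
    then obtain A mu d where a: "a = (A, mu, d)" and A: "A \<in> msets_in X n"
      and mu: "msrc mu = A" "mtgt mu = B" and d: "d \<in> mset_decompositions k f I mu"
      by (auto simp: multations_def)
    have "(\<Sum>i<k. d i) = size mu"
      using d by (auto simp: mset_decompositions_def size_mset_of_counts)
    also have "\<dots> = n"
      using A mu by (simp add: msets_in_def msrc_def flip: size_image_mset[of fst])
    finally show "(\<lambda>(A, mu, d). d) a \<in> {d \<in> supported_counts k I n. mtgt (mset_of_counts k f d) = B}"
      using a d mu by (simp add: supported_counts_def mset_decompositions_def)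
  qed
  show "(\<lambda>d. (msrc (mset_of_counts k f d), mset_of_counts k f d, d)) `
          {d \<in> supported_counts k I n. mtgt (mset_of_counts k f d) = B} \<subseteq> ?S"
  proof (rule image_subsetI)
    fix d assume d: "d \<in> {d \<in> supported_counts k I n. mtgt (mset_of_counts k f d) = B}"
    have "msrc (mset_of_counts k f d) \<in> msets_in X n"
      unfolding msrc_mset_of_counts
      by (rule mset_of_counts_in_msets_in) (use assms d in \<open>auto simp: supported_counts_def\<close>)
    thus "(msrc (mset_of_counts k f d), mset_of_counts k f d, d) \<in> ?S"
      using d by (simp add: multations_def mset_decompositions_def supported_counts_def)
  qed
qed simp

lemma finite_multations: "finite (multations A B)"
proof (rule finite_subset)
  show "multations A B \<subseteq> msets_in (set_mset A \<times> set_mset B) (size A)"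
    by (force simp: multations_def msets_in_def msrc_def mtgt_def)
qed (simp add: finite_msets_in)

lemma PsiInv_map_sigma_sum:
  assumes ms: "module scale" and X: "finite X" and I: "I \<subseteq> {..<k}"
    and f: "\<forall>i<k. fst (f i) \<in> X \<and> snd (f i) \<in> Y"
  shows "PsiInv_map n scale JM X Y (sigma_sum f b I) v B =
           (\<Sum>d\<in>supported_counts k I n. PsiInv_term scale JM k f b v B d)"
proof (cases "B \<in> msets_in Y n")
  case False
  have "mtgt (mset_of_counts k f d) \<in> msets_in Y n" if "d \<in> supported_counts k I n" for d
    unfolding mtgt_mset_of_counts
    by (rule mset_of_counts_in_msets_in) (use f that in \<open>auto simp: supported_counts_def\<close>)
  hence "mtgt (mset_of_counts k f d) \<noteq> B" if "d \<in> supported_counts k I n" for d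
    using False that by blast
  thus ?thesis using False by (simp add: PsiInv_map_def PsiInv_term_def)
next
  case True
  let ?S = "SIGMA A:msets_in X n. SIGMA mu:multations A B. mset_decompositions k f I mu"
  let ?c = "\<lambda>d. of_nat (multinomial_coeff k f d) * (\<Prod>i\<in>I. b i ^ d i)"
  have prod_I: "(\<Prod>i<k. b i ^ d i) = (\<Prod>i\<in>I. b i ^ d i)" if "\<forall>i. i \<notin> I \<longrightarrow> d i = 0" for d
    by (rule prod.mono_neutral_right) (use I that in auto)
  have "PsiInv_map n scale JM X Y (sigma_sum f b I) v B =
          (\<Sum>A\<in>msets_in X n. \<Sum>mu\<in>multations A B. \<Sum>d\<in>mset_decompositions k f I mu.
             scale (?c d) (JM mu (v A)))"
    using True by (simp add: PsiInv_map_def smon_sigma_sum[OF I] module.scale_sum_left[OF ms])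
  also have "\<dots> = (\<Sum>A\<in>msets_in X n. \<Sum>(mu, d)\<in>Sigma (multations A B) (mset_decompositions k f I).
                    scale (?c d) (JM mu (v A)))"
    by (intro sum.cong refl sum.Sigma) (simp_all add: finite_multations finite_mset_decompositions[OF I])
  also have "\<dots> = (\<Sum>(A, mu, d)\<in>?S. scale (?c d) (JM mu (v A)))"
    by (rule sum.Sigma) (simp_all add: finite_multations finite_msets_in X finite_mset_decompositions[OF I])
  also have "\<dots> = (\<Sum>d\<in>{d \<in> supported_counts k I n. mtgt (mset_of_counts k f d) = B}.
                    PsiInv_term scale JM k f b v B d)"
  proof -
    have "\<forall>i<k. fst (f i) \<in> X" using f by blast
    note bij = bij_betw_supported_counts_multations[OF this, of I n B]
    show ?thesis
      by (subst sum.reindex_bij_betw[OF bij, symmetric])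
         (auto simp: PsiInv_term_def supported_counts_def prod_I intro: sum.cong)
  qed
  also have "\<dots> = (\<Sum>d\<in>supported_counts k I n. PsiInv_term scale JM k f b v B d)"
    by (rule sum.mono_neutral_left) (auto simp: PsiInv_term_def finite_supported_counts[OF I])
  finally show ?thesis .
qed

lemma sum_supersets_alternating:
  assumes "finite K" "S \<subseteq> K"
  shows "(\<Sum>I | I \<in> Pow K \<and> S \<subseteq> I. (-1::'b::comm_ring_1) ^ (card K - card I)) =
           (if S = K then 1 else 0)"
proof -
  define f where "f T = (if T = S then 1 else (0::'b))" for T
  define g where "g T = (if S \<subseteq> T then 1 else (0::'b))" for T
  have "\<And>T. finite T \<Longrightarrow> g T = sum f (Pow T)"
    unfolding f_def g_def by (simp add: sum.delta')
  hence "f K = (\<Sum>T\<in>Pow K. (-1) ^ (card K - card T) * g T)"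
    by (rule inclusion_exclusion_mobius) (use assms in auto)
  also have "\<dots> = (\<Sum>T\<in>Pow K. if S \<subseteq> T then (-1) ^ (card K - card T) else 0)"
    unfolding g_def by (rule sum.cong) auto
  also have "\<dots> = (\<Sum>I | I \<in> Pow K \<and> S \<subseteq> I. (-1::'b) ^ (card K - card I))"
    using sum.inter_filter[of "Pow K" "\<lambda>I. (-1::'b) ^ (card K - card I)" "\<lambda>I. S \<subseteq> I"] assms
    by (simp add: Collect_conj_eq)
  finally show ?thesis by (simp add: f_def eq_commute)
qed

lemma sum_Pow_alternating_supported:
  fixes scale :: "'b::comm_ring_1 \<Rightarrow> 'm::ab_group_add \<Rightarrow> 'm"
  assumes ms: "module scale" and K: "finite K" and E: "finite E" and S: "\<forall>d\<in>E. S d \<subseteq> K"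
  shows "(\<Sum>I\<in>Pow K. scale ((-1) ^ (card K - card I)) (\<Sum>d\<in>{d \<in> E. S d \<subseteq> I}. H d)) =
           (\<Sum>d\<in>{d \<in> E. S d = K}. H d)"
proof -
  have "(\<Sum>I\<in>Pow K. scale ((-1) ^ (card K - card I)) (\<Sum>d\<in>{d \<in> E. S d \<subseteq> I}. H d)) =
          (\<Sum>I\<in>Pow K. \<Sum>d\<in>{d \<in> E. S d \<subseteq> I}. scale ((-1) ^ (card K - card I)) (H d))"
    by (simp add: module.scale_sum_right[OF ms])
  also have "\<dots> = (\<Sum>d\<in>E. \<Sum>I | I \<in> Pow K \<and> S d \<subseteq> I. scale ((-1) ^ (card K - card I)) (H d))"
    by (rule sum.swap_restrict) (simp_all add: K E)
  also have "\<dots> = (\<Sum>d\<in>E. scale (\<Sum>I | I \<in> Pow K \<and> S d \<subseteq> I. (-1) ^ (card K - card I)) (H d))"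
    by (simp add: module.scale_sum_left[OF ms])
  also have "\<dots> = (\<Sum>d\<in>E. if S d = K then H d else 0)"
  proof (rule sum.cong[OF refl])
    fix d assume "d \<in> E"
    hence Sd: "S d \<subseteq> K" using S by blast
    show "scale (\<Sum>I | I \<in> Pow K \<and> S d \<subseteq> I. (-1) ^ (card K - card I)) (H d) =
            (if S d = K then H d else 0)"
      by (subst sum_supersets_alternating[OF K Sd])
         (simp add: module.scale_one[OF ms] module.scale_zero_left[OF ms])
  qed
  also have "\<dots> = (\<Sum>d\<in>{d \<in> E. S d = K}. H d)"
    by (simp add: sum.inter_filter[OF E])
  finally show ?thesis .
qed

definition positive_counts :: "nat \<Rightarrow> nat \<Rightarrow> (nat \<Rightarrow> nat) set" where
  "positive_counts k n = {d \<in> supported_counts k {..<k} n. \<forall>i<k. 0 < d i}"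

lemma cross_eff_sigma_sum:
  assumes ms: "module scale" and X: "finite X"
    and f: "\<forall>i<k. fst (f i) \<in> X \<and> snd (f i) \<in> Y"
  shows "cross_eff scale (PsiInv_map n scale JM X Y) {..<k} (\<lambda>i. sigma (b i) (snd (f i)) (fst (f i))) v B
         = (\<Sum>d\<in>positive_counts k n. PsiInv_term scale JM k f b v B d)"
proof -
  let ?K = "{..<k}" and ?E = "supported_counts k {..<k} n"
  let ?H = "PsiInv_term scale JM k f b v B"
  define supp where "supp d = {i\<in>?K. d i \<noteq> 0}" for d :: "nat \<Rightarrow> nat"
  have "cross_eff scale (PsiInv_map n scale JM X Y) ?K (\<lambda>i. sigma (b i) (snd (f i)) (fst (f i))) v B
      = (\<Sum>I\<in>Pow ?K. scale ((-1) ^ (card ?K - card I)) (\<Sum>d\<in>{d \<in> ?E. supp d \<subseteq> I}. ?H d))"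
    unfolding cross_eff_def sum_sigma_eq_sigma_sum
  proof (rule sum.cong[OF refl])
    fix I assume "I \<in> Pow ?K"
    hence I: "I \<subseteq> ?K" by simp
    have "supported_counts k I n = {d \<in> ?E. supp d \<subseteq> I}"
      using I by (auto simp: supported_counts_def supp_def)
    thus "scale ((-1) ^ (card ?K - card I)) (PsiInv_map n scale JM X Y (sigma_sum f b I) v B) =
          scale ((-1) ^ (card ?K - card I)) (\<Sum>d\<in>{d \<in> ?E. supp d \<subseteq> I}. ?H d)"
      using PsiInv_map_sigma_sum[OF ms X I f] by simp
  qed
  also have "\<dots> = (\<Sum>d\<in>{d \<in> ?E. supp d = ?K}. ?H d)"
    by (rule sum_Pow_alternating_supported[OF ms])
       (auto simp: finite_supported_counts supp_def)
  also have "{d \<in> ?E. supp d = ?K} = positive_counts k n"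
  proof -
    have "supp d = ?K \<longleftrightarrow> (\<forall>i<k. 0 < d i)" for d
      by (auto simp: supp_def)
    thus ?thesis by (simp add: positive_counts_def)
  qed
  finally show ?thesis .
qed

lemma bij_betw_assignments_positive_counts:
  "bij_betw (\<lambda>l i. if i < k then l ! i else 0) (assignments k n) (positive_counts k n)"
proof (rule bij_betw_byWitness[where f' = "\<lambda>d. map d [0..<k]"])
  show "\<forall>l\<in>assignments k n. map (\<lambda>i. if i < k then l ! i else 0) [0..<k] = l"
    by (auto simp: assignments_def intro: nth_equalityI)
  show "\<forall>d\<in>positive_counts k n. (\<lambda>i. if i < k then map d [0..<k] ! i else 0) = d"
    by (auto simp: positive_counts_def supported_counts_def fun_eq_iff)
  show "(\<lambda>l i. if i < k then l ! i else 0) ` assignments k n \<subseteq> positive_counts k n"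
    by (auto simp: assignments_def positive_counts_def supported_counts_def Suc_le_eq
                   sum_list_sum_nth atLeast0LessThan)
  show "(\<lambda>d. map d [0..<k]) ` positive_counts k n \<subseteq> assignments k n"
    by (auto simp: assignments_def positive_counts_def supported_counts_def Suc_le_eq
                   sum_list_sum_nth atLeast0LessThan)
qed

theorem Phi_PsiInv_map_eq_JA_map:
  assumes ms: "module scale" and P: "is_maze X Y P"
  shows "Phi_PsiInv_map n scale JM X Y P v = JA_map n scale JM P v"
proof
  fix B
  let ?k = "length P"
  define f where "f i = (fst (P ! i), fst (snd (P ! i)))" for i
  define b where "b i = snd (snd (P ! i))" for i
  have X: "finite X" and f: "\<forall>i<?k. fst (f i) \<in> X \<and> snd (f i) \<in> Y"
    using P by (auto simp: is_maze_def f_def)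
  have "Phi_PsiInv_map n scale JM X Y P v B =
          (\<Sum>d\<in>positive_counts ?k n. PsiInv_term scale JM ?k f b v B d)"
  proof -
    have "(\<lambda>i. sigma (b i) (snd (f i)) (fst (f i))) =
            (\<lambda>i. sigma (snd (snd (P ! i))) (fst (snd (P ! i))) (fst (P ! i)))"
      by (simp add: f_def b_def)
    thus ?thesis
      using cross_eff_sigma_sum[OF ms X f, of n JM b v B] by (simp add: Phi_PsiInv_map_def)
  qed
  also have "\<dots> = JA_map n scale JM P v B"
    unfolding JA_map_def
  proof (rule sum.reindex_bij_betw[OF bij_betw_assignments_positive_counts, symmetric, THEN trans],
         rule sum.cong[OF refl])
    fix l :: "nat list"
    let ?d = "\<lambda>i. if i < ?k then l ! i else 0"
    have M: "mset_of_counts ?k f ?d = dmult P l"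
      unfolding mset_of_counts_def dmult_def f_def by (rule sum.cong) auto
    have "(\<Prod>i<?k. fact (?d i)) = (\<Prod>i<?k. fact (l ! i) :: nat)"
      by (rule prod.cong) auto
    hence "multinomial_coeff ?k f ?d = dp_coeff P l"
      by (simp add: multinomial_coeff_def dp_coeff_def M)
    moreover have "(\<Prod>i<?k. b i ^ ?d i) = (\<Prod>i<?k. snd (snd (P ! i)) ^ (l ! i))"
      by (rule prod.cong) (auto simp: b_def)
    ultimately show "PsiInv_term scale JM ?k f b v B ?d =
      (if mtgt (dmult P l) = B
       then scale (of_nat (dp_coeff P l) * (\<Prod>i<?k. snd (snd (P ! i)) ^ l ! i))
              (JM (dmult P l) (v (msrc (dmult P l))))
       else 0)"
      by (simp add: PsiInv_term_def M)
  qed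
  finally show "Phi_PsiInv_map n scale JM X Y P v B = JA_map n scale JM P v B" .
qed

lemma cross_eff_reindex:
  assumes "bij_betw g K Ix" "finite K"
  shows "cross_eff scale Fm Ix alpha = cross_eff scale Fm K (alpha \<circ> g)"
proof -
  have inj: "inj_on g I" if "I \<in> Pow K" for I
    using that assms(1) by (auto simp: bij_betw_def intro: inj_on_subset)
  have "card Ix = card K" using bij_betw_same_card[OF assms(1)] ..
  moreover have "card (g ` I) = card I" "(\<Sum>i\<in>g ` I. alpha i y x) = (\<Sum>i\<in>I. alpha (g i) y x)"
    if "I \<in> Pow K" for I y x
    using inj[OF that] by (simp_all add: card_image sum.reindex)
  ultimately show ?thesis
    unfolding cross_eff_def
    by (subst sum.reindex_bij_betw[OF bij_betw_image_Pow[OF assms(1)], symmetric]) simp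
qed

lemma bij_betw_positive_counts_msets:
  assumes "distinct xs"
  shows "bij_betw (mset_of_counts (length xs) (nth xs)) (positive_counts (length xs) n)
           {B. set_mset B = set xs \<and> size B = n}"
proof (rule bij_betw_byWitness[where f' = "\<lambda>B i. if i < length xs then count B (xs ! i) else 0"])
  let ?k = "length xs"
  have inj: "inj_on (nth xs) {..<?k}" using assms by (simp add: inj_on_nth)
  show "\<forall>d\<in>positive_counts ?k n.
          (\<lambda>i. if i < ?k then count (mset_of_counts ?k (nth xs) d) (xs ! i) else 0) = d"
    by (auto simp: count_mset_of_counts_inj[OF inj] positive_counts_def supported_counts_def fun_eq_iff)
  show "\<forall>B\<in>{B. set_mset B = set xs \<and> size B = n}.
          mset_of_counts ?k (nth xs) (\<lambda>i. if i < ?k then count B (xs ! i) else 0) = B"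
  proof (intro ballI multiset_eqI)
    fix B x assume B: "B \<in> {B. set_mset B = set xs \<and> size B = n}"
    show "count (mset_of_counts ?k (nth xs) (\<lambda>i. if i < ?k then count B (xs ! i) else 0)) x = count B x"
    proof (cases "x \<in> set xs")
      case True
      then obtain j where "j < ?k" "x = xs ! j" by (auto simp: in_set_conv_nth)
      thus ?thesis by (simp add: count_mset_of_counts_inj[OF inj])
    next
      case False
      thus ?thesis using B by (auto simp: count_mset_of_counts not_in_iff intro!: sum.neutral)
    qed
  qed
  show "mset_of_counts ?k (nth xs) ` positive_counts ?k n \<subseteq> {B. set_mset B = set xs \<and> size B = n}"
    by (auto simp: positive_counts_def supported_counts_def set_mset_of_counts size_mset_of_counts
                   in_set_conv_nth)
  show "(\<lambda>B i. if i < ?k then count B (xs ! i) else 0) ` {B. set_mset B = set xs \<and> size B = n}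
          \<subseteq> positive_counts ?k n"
  proof (rule image_subsetI)
    fix B assume B: "B \<in> {B. set_mset B = set xs \<and> size B = n}"
    have "set xs = nth xs ` {..<?k}" by (auto simp: in_set_conv_nth)
    hence "(\<Sum>i<?k. count B (xs ! i)) = (\<Sum>x\<in>set xs. count B x)"
      by (simp add: sum.reindex[OF inj])
    also have "\<dots> = n" using B by (auto simp: size_multiset_overloaded_eq)
    finally show "(\<lambda>i. if i < ?k then count B (xs ! i) else 0) \<in> positive_counts ?k n"
      using B by (auto simp: positive_counts_def supported_counts_def)
  qed
qed

lemma linear_functor_MSet_mdiag:
  assumes "linear_functor_MSet n scale JO JM" "size A = n" "v \<in> JO A"
  shows "JM (mdiag A) v = v"
proof -
  have "\<forall>A. size A = n \<longrightarrow> (\<forall>v\<in>JO A. JM (mdiag A) v = v)"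
    using assms(1) unfolding linear_functor_MSet_def by (elim conjE) assumption
  thus ?thesis using assms(2,3) by blast
qed

lemma linear_functor_MSet_zero:
  assumes "module scale" "linear_functor_MSet n scale JO JM" "size A = n"
  shows "0 \<in> JO A"
proof -
  have "\<forall>A. size A = n \<longrightarrow> module.subspace scale (JO A)"
    using assms(2) unfolding linear_functor_MSet_def by (elim conjE) assumption
  thus ?thesis using assms(3) module.subspace_0[OF assms(1)] by blast
qed

lemma PsiInv_term_diagonal:
  assumes ms: "module scale" and J: "linear_functor_MSet n scale JO JM"
    and xs: "distinct xs" and v: "v \<in> PsiInv_obj n JO (set xs)" and d: "d \<in> positive_counts (length xs) n"
  shows "PsiInv_term scale JM (length xs) (\<lambda>i. (xs ! i, xs ! i)) (\<lambda>_. 1) v B d =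
           (if mset_of_counts (length xs) (nth xs) d = B then v B else 0)"
proof -
  let ?k = "length xs" and ?M = "mset_of_counts (length xs) (nth xs) d"
  have inj: "inj_on (\<lambda>i. (xs ! i, xs ! i)) {..<?k}"
    using xs by (auto simp: inj_on_def nth_eq_iff_index_eq)
  have M: "mset_of_counts ?k (\<lambda>i. (xs ! i, xs ! i)) d = mdiag ?M"
    by (simp add: mdiag_def image_mset_of_counts comp_def)
  have "?M \<in> msets_in (set xs) n"
    using d by (intro mset_of_counts_in_msets_in) (auto simp: positive_counts_def supported_counts_def)
  hence "JM (mdiag ?M) (v ?M) = v ?M"
    using v by (intro linear_functor_MSet_mdiag[OF J]) (auto simp: msets_in_def PsiInv_obj_def dsum_def)
  moreover have "msrc (mdiag ?M) = ?M" "mtgt (mdiag ?M) = ?M"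
    by (simp_all add: msrc_def mtgt_def mdiag_def image_mset.compositionality comp_def)
  ultimately show ?thesis
    by (auto simp: PsiInv_term_def M multinomial_coeff_inj[OF inj] module.scale_one[OF ms])
qed

lemma cross_eff_projections:
  assumes ms: "module scale" and J: "linear_functor_MSet n scale JO JM"
    and X: "finite X" and v: "v \<in> PsiInv_obj n JO X"
  shows "cross_eff scale (PsiInv_map n scale JM X X) X (\<lambda>x. sigma 1 x x) v =
           (\<lambda>B. if B \<in> {B. set_mset B = X \<and> size B = n} then v B else 0)"
proof
  fix B
  obtain xs where xs: "set xs = X" "distinct xs" using finite_distinct_list[OF X] by blast
  let ?k = "length xs" and ?M = "mset_of_counts (length xs) (nth xs)"
  let ?f = "\<lambda>i. (xs ! i, xs ! i)"
  have fin: "finite {B. set_mset B = X \<and> size B = n}"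
    by (rule finite_subset[OF _ finite_msets_in[OF X, of n]]) (auto simp: msets_in_def)
  have "cross_eff scale (PsiInv_map n scale JM X X) X (\<lambda>x. sigma 1 x x) v B =
          cross_eff scale (PsiInv_map n scale JM X X) {..<?k}
            (\<lambda>i. sigma ((\<lambda>_. 1) i) (snd (?f i)) (fst (?f i))) v B"
    using cross_eff_reindex[OF bij_betw_nth[OF xs(2) refl xs(1)[symmetric]] finite_lessThan,
                            of scale "PsiInv_map n scale JM X X" "\<lambda>x. sigma 1 x x"]
    by (simp add: comp_def)
  also have "\<dots> = (\<Sum>d\<in>positive_counts ?k n. PsiInv_term scale JM ?k ?f (\<lambda>_. 1) v B d)"
    by (rule cross_eff_sigma_sum[OF ms X]) (use xs in auto)
  also have "\<dots> = (\<Sum>d\<in>positive_counts ?k n. if ?M d = B then v B else 0)"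
    using v xs by (intro sum.cong refl PsiInv_term_diagonal[OF ms J]) auto
  also have "\<dots> = (\<Sum>B'\<in>{B. set_mset B = X \<and> size B = n}. if B' = B then v B else 0)"
    using sum.reindex_bij_betw[OF bij_betw_positive_counts_msets[OF xs(2)]] xs(1) by simp
  also have "\<dots> = (if B \<in> {B. set_mset B = X \<and> size B = n} then v B else 0)"
    using sum.delta[OF fin, of B "\<lambda>_. v B"] by simp
  finally show "cross_eff scale (PsiInv_map n scale JM X X) X (\<lambda>x. sigma 1 x x) v B =
                  (if B \<in> {B. set_mset B = X \<and> size B = n} then v B else 0)" .
qed

lemma image_restrict_dsum:
  assumes "S \<subseteq> I" "\<forall>A\<in>I - S. 0 \<in> JO A"
  shows "(\<lambda>v B. if B \<in> S then v B else 0) ` dsum I JO = dsum S JO"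
proof
  show "(\<lambda>v B. if B \<in> S then v B else 0) ` dsum I JO \<subseteq> dsum S JO"
    using assms(1) by (auto simp: dsum_def)
  show "dsum S JO \<subseteq> (\<lambda>v B. if B \<in> S then v B else 0) ` dsum I JO"
  proof
    fix w assume w: "w \<in> dsum S JO"
    hence "w = (\<lambda>B. if B \<in> S then w B else 0)" and "w \<in> dsum I JO"
      using assms by (auto simp: dsum_def)
    thus "w \<in> (\<lambda>v B. if B \<in> S then v B else 0) ` dsum I JO" by blast
  qed
qed

theorem Phi_PsiInv_obj_eq_JA_obj:
  assumes ms: "module scale" and J: "linear_functor_MSet n scale JO JM" and X: "finite X"
  shows "Phi_PsiInv_obj n scale JO JM X = JA_obj n JO X"
proof -
  let ?S = "{B. set_mset B = X \<and> size B = n}"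
  have "Phi_PsiInv_obj n scale JO JM X = (\<lambda>v B. if B \<in> ?S then v B else 0) ` PsiInv_obj n JO X"
    unfolding Phi_PsiInv_obj_def by (rule image_cong[OF refl cross_eff_projections[OF ms J X]])
  also have "\<dots> = JA_obj n JO X"
    unfolding PsiInv_obj_def JA_obj_def
    by (rule image_restrict_dsum)
       (auto simp: msets_in_def intro: linear_functor_MSet_zero[OF ms J])
  finally show ?thesis .
qed

theorem mainTheorem5:
  fixes n :: nat
    and scale :: "'b::comm_ring_1 \<Rightarrow> 'm::ab_group_add \<Rightarrow> 'm"
    and JO :: "'x multiset \<Rightarrow> 'm set"
    and JM :: "('x \<times> 'x) multiset \<Rightarrow> 'm \<Rightarrow> 'm"
  assumes "binomial_ring TYPE('b)"
    and "module scale"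
    and "linear_functor_MSet n scale JO JM"
  shows "(\<forall>X::'x set. finite X \<longrightarrow> Phi_PsiInv_obj n scale JO JM X = JA_obj n JO X)
       \<and> (\<forall>(X::'x set) (Y::'x set) (P::('x \<times> 'x \<times> 'b) list). is_maze X Y P \<longrightarrow>
            (\<forall>v\<in>JA_obj n JO X. Phi_PsiInv_map n scale JM X Y P v = JA_map n scale JM P v))"
proof (intro conjI allI impI ballI)
  fix X :: "'x set"
  assume "finite X"
  thus "Phi_PsiInv_obj n scale JO JM X = JA_obj n JO X"
    by (rule Phi_PsiInv_obj_eq_JA_obj[OF assms(2,3)])
next
  fix X Y :: "'x set" and P :: "('x \<times> 'x \<times> 'b) list" and v
  assume "is_maze X Y P"
  thus "Phi_PsiInv_map n scale JM X Y P v = JA_map n scale JM P v"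
    by (rule Phi_PsiInv_map_eq_JA_map[OF assms(2)])
qed

end
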